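(* Let $n,k$ be positive integers with $k(k+1)\mid n$, and let $\mathcal C$ be the code of Construction B (see context). Then $\mathcal C$ is a uniform $\bigl(n,(k-1+\frac1k)n,k,k+1\bigr)$-BAC over $\mathbb{F}_q$ in which every bucket has length $(k-1+\frac1k)\frac{n}{k+1}$.
   Context: Fix a finite field $\mathbb{F}_q$; $[n]=\{1,\dots,n\}$. An $(n,N,k,m)$-batch array code (BAC) over $\mathbb{F}_q$ is an $\mathbb{F}_q$-linear map $\mathcal{C}:\mathbf x=(x_1,\dots,x_n)\in\mathbb{F}_q^n\mapsto(\mathbf c_1,\dots,\mathbf c_m)$ with buckets $\mathbf c_\ell\in\mathbb{F}_q^{N_\ell}$, $N_\ell\ge1$ independent of $\mathbf x$, $\sum_\ell N_\ell=N$, such that for every multiset $\{\{i_1,\dots,i_k\}\}$ of elements of $[n]$ there is a partition of $[m]$ into $k$ sets $R_1,\dots,R_k$ such that for each $j\in[k]$, $x_{i_j}$ is an $\mathbb{F}_q$-linear combination of values $f_\ell(\mathbf c_\ell)$, $\ell\in R_j$, for some linear functionals $f_\ell:\mathbb{F}_q^{N_\ell}\to\mathbb{F}_q$ (independent of $\mathbf x$). It is uniform if all $N_\ell$ are equal. Code $\mathcal C_0$: for $n_0$ with $k\mid n_0$ and $\mathbf z=(z_1,\dots,z_{n_0})$, let $P_\ell=\{(\ell-1)\frac{n_0}{k}+b:1\le b\le \frac{n_0}{k}\}$ for $\ell\in[k]$, let $\mathcal C_0(\mathbf z)=(\mathbf d_1,\dots,\mathbf d_{k+1})$ where $\mathbf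 d_\ell$ ($\ell\in[k]$) is the vector of entries $z_i$, $i\in[n_0]\setminus P_\ell$, and $\mathbf d_{k+1}=\sum_{t=0}^{k-1}(z_{t\frac{n_0}{k}+1},\dots,z_{t\frac{n_0}{k}+\frac{n_0}{k}})$. Construction B: set $n_0=\frac{n}{k+1}$; for $\mathbf x\in\mathbb{F}_q^n$ and $j\in[k+1]$ let $\mathbf x_j=(x_{(j-1)n_0+1},\dots,x_{jn_0})$ and $\mathcal C_0(\mathbf x_j)=(\mathbf c_{j,1},\dots,\mathbf c_{j,k+1})$; define $\mathcal C(\mathbf x)=(\mathbf c_1,\dots,\mathbf c_{k+1})$ with $\mathbf c_\ell=(\mathbf c_{1,\ell},\mathbf c_{2,\ell-1},\dots,\mathbf c_{k+1,\ell-k})$, second indices taken modulo $k+1$ with representatives in $[k+1]$. *)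

theory Defs
  imports Complex_Main
begin

text \<open>A message is a function x :: nat => 'a, of which only the
entries x 1, ..., x n (indices in [n] = {1..n}) are meaningful. An encoder with
m buckets is a function C :: (nat => 'a) => nat => 'a list; C x l is bucket l
(for l in {1..m}), a vector over the field written as a list (positions 0-based).\<close>

definition linear_encoder ::
  "nat \<Rightarrow> nat \<Rightarrow> (nat \<Rightarrow> nat) \<Rightarrow> ((nat \<Rightarrow> 'a::field) \<Rightarrow> nat \<Rightarrow> 'a list) \<Rightarrow> bool" where
  "linear_encoder n m Nl C \<longleftrightarrow>
     (\<forall>x. \<forall>l\<in>{1..m}. length (C x l) = Nl l) \<and>
     (\<forall>x y. (\<forall>i\<in>{1..n}. x i = y i) \<longrightarrow> (\<forall>l\<in>{1..m}. C x l = C y l)) \<and>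
     (\<forall>x y a b. \<forall>l\<in>{1..m}. \<forall>t<Nl l.
        C (\<lambda>i. a * x i + b * y i) l ! t = a * (C x l ! t) + b * (C y l ! t))"

definition is_partition_into :: "nat \<Rightarrow> nat \<Rightarrow> (nat \<Rightarrow> nat set) \<Rightarrow> bool" where
  "is_partition_into m k R \<longleftrightarrow>
     (\<Union>j\<in>{1..k}. R j) = {1..m} \<and>
     (\<forall>j\<in>{1..k}. R j \<noteq> {}) \<and>
     (\<forall>j\<in>{1..k}. \<forall>j'\<in>{1..k}. j \<noteq> j' \<longrightarrow> R j \<inter> R j' = {})"

text \<open>(n,N,k,m)-batch array code. The multiset {{i_1,...,i_k}} of elements
of [n] is given by the tuple (i 1, ..., i k); a linear functional f_l on
F^(N_l) is given by its coefficient vector f l.\<close>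
definition is_BAC ::
  "nat \<Rightarrow> nat \<Rightarrow> nat \<Rightarrow> nat \<Rightarrow> ((nat \<Rightarrow> 'a::field) \<Rightarrow> nat \<Rightarrow> 'a list) \<Rightarrow> bool" where
  "is_BAC n N k m C \<longleftrightarrow>
     (\<exists>Nl. (\<forall>l\<in>{1..m}. Nl l \<ge> 1) \<and> (\<Sum>l=1..m. Nl l) = N \<and>
        linear_encoder n m Nl C \<and>
        (\<forall>i::nat \<Rightarrow> nat. (\<forall>j\<in>{1..k}. i j \<in> {1..n}) \<longrightarrow>
           (\<exists>R. is_partition_into m k R \<and>
              (\<forall>j\<in>{1..k}. \<exists>(f::nat \<Rightarrow> nat \<Rightarrow> 'a) (g::nat \<Rightarrow> 'a).
                 \<forall>x. x (i j) = (\<Sum>l\<in>R j. g l * (\<Sum>t<Nl l. f l t * (C x l ! t)))))))"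

definition is_uniform_BAC ::
  "nat \<Rightarrow> nat \<Rightarrow> nat \<Rightarrow> nat \<Rightarrow> ((nat \<Rightarrow> 'a::field) \<Rightarrow> nat \<Rightarrow> 'a list) \<Rightarrow> bool" where
  "is_uniform_BAC n N k m C \<longleftrightarrow> is_BAC n N k m C \<and>
     (\<forall>x y. \<forall>l\<in>{1..m}. \<forall>l'\<in>{1..m}. length (C x l) = length (C y l'))"

definition P0 :: "nat \<Rightarrow> nat \<Rightarrow> nat \<Rightarrow> nat set" where
  "P0 n0 k l = {(l - 1) * (n0 div k) + b | b. 1 \<le> b \<and> b \<le> n0 div k}"

definition C0 :: "nat \<Rightarrow> nat \<Rightarrow> (nat \<Rightarrow> 'a::field) \<Rightarrow> nat \<Rightarrow> 'a list" where
  "C0 n0 k z l =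
     (if l \<le> k then map z (sorted_list_of_set ({1..n0} - P0 n0 k l))
      else map (\<lambda>b. \<Sum>t<k. z (t * (n0 div k) + b)) [1..<n0 div k + 1])"

definition mod_rep :: "int \<Rightarrow> nat \<Rightarrow> nat" where
  "mod_rep a m = nat ((a - 1) mod int m + 1)"

text \<open>Construction B: c_l = (c_{1,l}, c_{2,l-1}, ..., c_{k+1,l-k}).\<close>
definition constrB :: "nat \<Rightarrow> nat \<Rightarrow> (nat \<Rightarrow> 'a::field) \<Rightarrow> nat \<Rightarrow> 'a list" where
  "constrB k n x l =
     (let n0 = n div (k + 1) in
      concat (map (\<lambda>j. C0 n0 k (\<lambda>b. x ((j - 1) * n0 + b))
                          (mod_rep (int l - (int j - 1)) (k + 1)))
                  [1..<k + 2]))"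

end

theory Submission
  imports Defs "HOL-Number_Theory.Cong"
begin

(*
  Write n = (k + 1) k s.  Each of the k + 1 blocks of the message is encoded by C_0 into k
  pieces of length (k - 1) s, piece c omitting the c-th sub-block of length s, and a parity
  piece of length s holding the sum of the k sub-blocks.  Bucket l receives piece l - j + 1
  (mod k + 1) of block j.  For fixed l this permutes the pieces, so every bucket has length
  k (k - 1) s + s; for fixed j it permutes the buckets.

  An entry of sub-block c of block j can be read off any single bucket storing a piece of
  block j other than piece c and the parity piece, and also from those two buckets together
  (the parity sum minus the other sub-blocks).  So each request has a set B of at most two
  buckets such that it is served by every set of buckets that is not a proper subset of B,
  and a greedy induction splits the k + 1 buckets into k such groups, one per request.
*)

lemma mod_rep_range: "0 < m \<Longrightarrow> mod_rep a m \<in> {1..m}"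
proof -
  assume "0 < m"
  then have "0 \<le> (a - 1) mod int m" "(a - 1) mod int m < int m" by simp_all
  then show ?thesis unfolding mod_rep_def by auto
qed

lemma mod_rep_eq_iff:
  assumes "0 < m" shows "mod_rep a m = mod_rep b m \<longleftrightarrow> [a = b] (mod int m)"
proof -
  have "mod_rep a m = mod_rep b m \<longleftrightarrow> [a - 1 = b - 1] (mod int m)"
    unfolding mod_rep_def cong_def using assms by (simp add: nat_eq_iff)
  also have "\<dots> \<longleftrightarrow> [a = b] (mod int m)"
    using cong_add_rcancel[of "a - 1" 1 "b - 1" "int m"] by simp
  finally show ?thesis .
qed

lemma cong_imp_eq_atLeastAtMost:
  assumes "[int a = int b] (mod int m)" "a \<in> {1..m}" "b \<in> {1..m}"
  shows "a = b"
proof -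
  have "[int a - 1 = int b - 1] (mod int m)"
    using cong_add_rcancel[of "int a - 1" 1 "int b - 1" "int m"] assms(1) by simp
  then have "int a - 1 = int b - 1" using assms(2,3) by (intro cong_less_imp_eq_int) auto
  then show ?thesis by simp
qed

lemma exists_partition_not_psubset:
  assumes "1 \<le> m" "finite V" "card V = Suc m"
    and "\<And>j. j \<in> {1..m} \<Longrightarrow> finite (B j) \<and> card (B j) \<le> 2"
  shows "\<exists>R. (\<Union>j\<in>{1..m}. R j) = V \<and> (\<forall>j\<in>{1..m}. R j \<noteq> {}) \<and>
    (\<forall>j\<in>{1..m}. \<forall>j'\<in>{1..m}. j \<noteq> j' \<longrightarrow> R j \<inter> R j' = {}) \<and> (\<forall>j\<in>{1..m}. \<not> R j \<subset> B j)"
  using assms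
proof (induction m arbitrary: V rule: nat_induct_at_least)
  case base
  have "\<not> V \<subset> B 1"
  proof
    assume "V \<subset> B 1"
    then have "card V < card (B 1)" using base.prems(3) by (intro psubset_card_mono) auto
    then show False using base.prems(2,3) by fastforce
  qed
  then show ?case using base.prems(2) by (intro exI[of _ "\<lambda>_. V"]) auto
next
  case (Suc m)
  have "\<not> V \<subseteq> B (Suc m)"
  proof
    assume "V \<subseteq> B (Suc m)"
    then have "card V \<le> card (B (Suc m))" using Suc.prems(3) by (intro card_mono) auto
    then show False using Suc.prems(2,3) Suc.hyps by fastforce
  qed
  then obtain v where v: "v \<in> V" "v \<notin> B (Suc m)" by blast
  obtain R where R: "(\<Union>j\<in>{1..m}. R j) = V - {v}" "\<forall>j\<in>{1..m}. R j \<noteq> {}"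
      "\<forall>j\<in>{1..m}. \<forall>j'\<in>{1..m}. j \<noteq> j' \<longrightarrow> R j \<inter> R j' = {}" "\<forall>j\<in>{1..m}. \<not> R j \<subset> B j"
    using Suc.IH[of "V - {v}"] Suc.prems v(1) by auto
  let ?R = "R(Suc m := {v})"
  have ins: "{1..Suc m} = insert (Suc m) {1..m}" by auto
  have "(\<Union>j\<in>{1..m}. ?R j) = (\<Union>j\<in>{1..m}. R j)" by simp
  then have "(\<Union>j\<in>{1..Suc m}. ?R j) = {v} \<union> (\<Union>j\<in>{1..m}. R j)"
    by (simp only: ins UN_insert fun_upd_same)
  then have "(\<Union>j\<in>{1..Suc m}. ?R j) = V" using R(1) v(1) by auto
  have "v \<notin> R j" if "j \<in> {1..m}" for j using R(1) that by blast
  then have "\<forall>j\<in>{1..Suc m}. \<forall>j'\<in>{1..Suc m}. j \<noteq> j' \<longrightarrow> ?R j \<inter> ?R j' = {}"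
    using R(3) by (simp add: ins)
  have R': "?R j \<noteq> {} \<and> \<not> ?R j \<subset> B j" if "j \<in> {1..Suc m}" for j
  proof (cases "j = Suc m")
    case True
    then show ?thesis using v(2) by auto
  next
    case False
    then show ?thesis using R(2,4) that by auto
  qed
  then have "\<forall>j\<in>{1..Suc m}. ?R j \<noteq> {}" "\<forall>j\<in>{1..Suc m}. \<not> ?R j \<subset> B j" by blast+
  show ?case by (rule exI[of _ ?R]) (intro conjI; fact)
qed

definition bucket_functional ::
  "((nat \<Rightarrow> 'a::field) \<Rightarrow> nat \<Rightarrow> 'a list) \<Rightarrow> nat \<Rightarrow> nat \<Rightarrow> ((nat \<Rightarrow> 'a) \<Rightarrow> 'a) \<Rightarrow> bool" where
  "bucket_functional C M l \<phi> \<longleftrightarrow> (\<exists>f. \<forall>x. \<phi> x = (\<Sum>t<M. f t * C x l ! t))"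

definition recoverable ::
  "((nat \<Rightarrow> 'a::field) \<Rightarrow> nat \<Rightarrow> 'a list) \<Rightarrow> nat \<Rightarrow> nat set \<Rightarrow> ((nat \<Rightarrow> 'a) \<Rightarrow> 'a) \<Rightarrow> bool" where
  "recoverable C M S \<phi> \<longleftrightarrow>
     (\<exists>(F::nat \<Rightarrow> nat \<Rightarrow> 'a) g. \<forall>x. \<phi> x = (\<Sum>l\<in>S. g l * (\<Sum>t<M. F l t * C x l ! t)))"

lemma bucket_functional_nth: "t < M \<Longrightarrow> bucket_functional C M l (\<lambda>x. C x l ! t)"
  unfolding bucket_functional_def
  by (rule exI[of _ "\<lambda>t'. if t' = t then 1 else 0"]) (simp add: if_distrib[of "\<lambda>c. c * _"] cong: if_cong)

lemma bucket_functional_sum: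
  assumes "\<And>u. u \<in> A \<Longrightarrow> bucket_functional C M l (\<phi> u)"
  shows "bucket_functional C M l (\<lambda>x. \<Sum>u\<in>A. \<phi> u x)"
proof -
  obtain f where f: "\<And>u x. u \<in> A \<Longrightarrow> \<phi> u x = (\<Sum>t<M. f u t * C x l ! t)"
    using assms unfolding bucket_functional_def by metis
  show ?thesis unfolding bucket_functional_def
    by (rule exI[of _ "\<lambda>t. \<Sum>u\<in>A. f u t"])
      (simp add: f sum_distrib_right sum.swap[of _ A])
qed

lemma recoverable_if_bucket_functional:
  assumes "finite S" "l \<in> S" "bucket_functional C M l \<phi>"
  shows "recoverable C M S \<phi>"
proof -
  obtain f where f: "\<And>x. \<phi> x = (\<Sum>t<M. f t * C x l ! t)"
    using assms(3) unfolding bucket_functional_def by blast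
  show ?thesis unfolding recoverable_def
  proof (intro exI allI)
    fix x
    let ?b = "\<lambda>l'. \<Sum>t<M. f t * C x l' ! t"
    have "(\<Sum>l'\<in>S. (if l' = l then 1 else 0) * ?b l') = (\<Sum>l'\<in>S. if l' = l then ?b l' else 0)"
      by (rule sum.cong) auto
    also have "\<dots> = \<phi> x" using assms(1,2) by (simp add: f)
    finally show "\<phi> x = (\<Sum>l'\<in>S. (if l' = l then 1 else 0) * (\<Sum>t<M. f t * C x l' ! t))" ..
  qed
qed

text \<open>The scalars g in the definition of recoverability are redundant, which makes
  recoverable functionals closed under linear combinations.\<close>
lemma recoverable_diff:
  assumes "recoverable C M S \<phi>" "recoverable C M S \<psi>"
  shows "recoverable C M S (\<lambda>x. \<phi> x - \<psi> x)"
proof -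
  obtain F g where F: "\<And>x. \<phi> x = (\<Sum>l\<in>S. g l * (\<Sum>t<M. F l t * C x l ! t))"
    using assms(1) unfolding recoverable_def by blast
  obtain G h where G: "\<And>x. \<psi> x = (\<Sum>l\<in>S. h l * (\<Sum>t<M. G l t * C x l ! t))"
    using assms(2) unfolding recoverable_def by blast
  have "(\<Sum>t<M. (g l * F l t - h l * G l t) * C x l ! t)
      = g l * (\<Sum>t<M. F l t * C x l ! t) - h l * (\<Sum>t<M. G l t * C x l ! t)" for x l
    by (simp add: left_diff_distrib sum_subtractf sum_distrib_left mult.assoc)
  then show ?thesis unfolding recoverable_def
    by (intro exI[of _ "\<lambda>l t. g l * F l t - h l * G l t"] exI[of _ "\<lambda>_. 1"])
      (simp add: F G sum_subtractf)
qed

lemma entry_in_concat_map: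
  assumes "\<And>x j. length (G x j) = len j" "j \<in> set js" "p < len j"
  shows "\<exists>t < sum_list (map len js). \<forall>x. concat (map (G x) js) ! t = G x j ! p"
  using assms(2)
proof (induction js)
  case (Cons a js)
  show ?case
  proof (cases "a = j")
    case True
    then show ?thesis using assms(1,3) by (intro exI[of _ p]) (auto simp: nth_append)
  next
    case False
    then obtain t where "t < sum_list (map len js)" "\<forall>x. concat (map (G x) js) ! t = G x j ! p"
      using Cons by auto
    then show ?thesis using assms(1) by (intro exI[of _ "len a + t"]) (auto simp: nth_append)
  qed
qed simp

lemma pos_in_concat_map:
  assumes "\<And>x j. length (G x j) = len j" "t < sum_list (map len js)"
  shows "\<exists>j\<in>set js. \<exists>p < len j. \<forall>x. concat (map (G x) js) ! t = G x j ! p"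
  using assms(2)
proof (induction js arbitrary: t)
  case (Cons a js)
  show ?case
  proof (cases "t < len a")
    case True
    then show ?thesis using assms(1) by (auto simp: nth_append)
  next
    case False
    then have "t - len a < sum_list (map len js)" using Cons.prems by simp
    then obtain j p where "j \<in> set js" "p < len j" "\<forall>x. concat (map (G x) js) ! (t - len a) = G x j ! p"
      using Cons.IH by blast
    then show ?thesis using assms(1) False by (intro bexI[of _ j] exI[of _ p]) (auto simp: nth_append)
  qed
qed simp

lemma P0_eq:
  assumes "0 < k" shows "P0 (k * s) k c = {(c - 1) * s + 1..(c - 1) * s + s}"
proof (intro set_eqI iffI)
  fix x assume "x \<in> {(c - 1) * s + 1..(c - 1) * s + s}"
  then show "x \<in> P0 (k * s) k c"
    using assms unfolding P0_def by (intro CollectI exI[of _ "x - (c - 1) * s"]) auto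
qed (use assms in \<open>auto simp: P0_def\<close>)

lemma diff_one_mult_add: "1 \<le> c \<Longrightarrow> (c - 1) * s + s = c * (s :: nat)"
  by (cases c) auto

lemma mem_P0_iff:
  assumes "0 < k" "1 \<le> c" "b \<in> {1..s}"
  shows "u * s + b \<in> P0 (k * s) k c \<longleftrightarrow> c = u + 1"
proof
  assume "u * s + b \<in> P0 (k * s) k c"
  then have "(c - 1) * s < u * s + s" "u * s + b \<le> c * s"
    using assms diff_one_mult_add[OF assms(2), of s] by (auto simp: P0_eq)
  moreover have "u * s + s = (u + 1) * s" "1 \<le> b" using assms(3) by simp_all
  ultimately have "(c - 1) * s < (u + 1) * s" "u * s < c * s" by linarith+
  then have "c - 1 < u + 1" "u < c" by (meson mult_less_cancel2)+
  then show "c = u + 1" by linarith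
qed (use assms in \<open>auto simp: P0_eq\<close>)

lemma P0_subset: "0 < k \<Longrightarrow> 1 \<le> c \<Longrightarrow> c \<le> k \<Longrightarrow> P0 (k * s) k c \<subseteq> {1..k * s}"
  using diff_one_mult_add[of c s] mult_le_mono1[of c k s] by (auto simp: P0_eq)

lemma offset_in_block: "u < k \<Longrightarrow> b \<in> {1..s} \<Longrightarrow> u * s + b \<in> {1..k * (s :: nat)}"
  using mult_le_mono1[of "u + 1" k s] by auto

lemma length_C0:
  assumes "0 < k" "1 \<le> c"
  shows "length (C0 (k * s) k z c) = (if c \<le> k then k * s - s else s)"
  using assms P0_subset[OF assms] by (simp add: C0_def card_Diff_subset P0_eq)

lemma nth_C0_kept:
  assumes "0 < k" "1 \<le> c" "c \<le> k" "i \<in> {1..k * s} - P0 (k * s) k c"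
  obtains p where "p < k * s - s" "\<And>z. C0 (k * s) k z c ! p = z i"
proof -
  let ?L = "sorted_list_of_set ({1..k * s} - P0 (k * s) k c)"
  obtain p where p: "p < length ?L" "?L ! p = i"
    using assms(4) by (metis finite_Diff finite_atLeastAtMost in_set_conv_nth set_sorted_list_of_set)
  have "length ?L = k * s - s" using length_C0[OF assms(1,2), of s] assms(3) by (simp add: C0_def)
  then show ?thesis using that p assms(3) by (simp add: C0_def)
qed

lemma nth_C0_parity:
  assumes "0 < k" "\<not> c \<le> k" "b \<in> {1..s}"
  shows "C0 (k * s) k z c ! (b - 1) = (\<Sum>u<k. z (u * s + b))"
proof -
  have "b - 1 < length [1..<s + 1]" "[1..<s + 1] ! (b - 1) = b"
    using assms(3) by (auto simp del: upt_Suc)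
  then show ?thesis using assms(1,2) by (simp add: C0_def del: upt_Suc)
qed

lemma nth_C0_eq_sum_list:
  fixes z :: "nat \<Rightarrow> 'a::field"
  assumes "0 < k" "1 \<le> c" "p < length (C0 (k * s) k z c)"
  obtains I where "set I \<subseteq> {1..k * s}"
    "\<And>z' :: nat \<Rightarrow> 'a. C0 (k * s) k z' c ! p = sum_list (map z' I)"
proof (cases "c \<le> k")
  case True
  let ?L = "sorted_list_of_set ({1..k * s} - P0 (k * s) k c)"
  have p: "p < length ?L" using assms True by (simp add: C0_def)
  then have "?L ! p \<in> set ?L" by (rule nth_mem)
  then have "?L ! p \<in> {1..k * s}" by simp
  then show ?thesis using that[of "[?L ! p]"] True p by (simp add: C0_def)
next
  case False
  let ?I = "map (\<lambda>u. u * s + (p + 1)) [0..<k]"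
  have p: "p + 1 \<in> {1..s}" using assms False length_C0[OF assms(1,2), of s z] by auto
  have "set ?I \<subseteq> {1..k * s}" using offset_in_block[OF _ p] by auto
  moreover have "C0 (k * s) k z' c ! p = sum_list (map z' ?I)" for z' :: "nat \<Rightarrow> 'a"
    using nth_C0_parity[OF assms(1) False p, of z']
    by (simp add: interv_sum_list_conv_sum_set_nat atLeast0LessThan comp_def)
  ultimately show ?thesis by (rule that)
qed

locale construction_B =
  fixes k s :: nat
  assumes k_pos: "0 < k" and s_pos: "0 < s"
begin

declare upt_Suc [simp del]

definition piece_index :: "nat \<Rightarrow> nat \<Rightarrow> nat" where
  "piece_index l j = mod_rep (int l - (int j - 1)) (k + 1)"

definition block :: "(nat \<Rightarrow> 'a) \<Rightarrow> nat \<Rightarrow> nat \<Rightarrow> 'a" where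
  "block x j b = x ((j - 1) * (k * s) + b)"

definition piece_length :: "nat \<Rightarrow> nat" where
  "piece_length c = (if c \<le> k then k * s - s else s)"

definition bucket_length :: nat where
  "bucket_length = k * (k * s - s) + s"

definition code :: "(nat \<Rightarrow> 'a::field) \<Rightarrow> nat \<Rightarrow> 'a list" where
  "code = constrB k ((k + 1) * (k * s))"

lemma code_eq_concat:
  "code x l = concat (map (\<lambda>j. C0 (k * s) k (block x j) (piece_index l j)) [1..<k + 2])"
proof -
  have "(k + 1) * (k * s) div (k + 1) = k * s" by (rule nonzero_mult_div_cancel_left) simp
  then show ?thesis unfolding code_def constrB_def Let_def block_def piece_index_def by simp
qed

lemma piece_index_range: "piece_index l j \<in> {1..k + 1}"
  unfolding piece_index_def using mod_rep_range[of "k + 1"] by simp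

lemma bij_betw_piece_index_block: "bij_betw (piece_index l) {1..k + 1} {1..k + 1}"
proof -
  have "inj_on (piece_index l) {1..k + 1}"
  proof (rule inj_onI)
    fix j j' assume j: "j \<in> {1..k + 1}" "j' \<in> {1..k + 1}" and "piece_index l j = piece_index l j'"
    then have "[int l - (int j - 1) = int l - (int j' - 1)] (mod int (k + 1))"
      by (simp add: piece_index_def mod_rep_eq_iff)
    then have "[int j = int j'] (mod int (k + 1))"
      using cong_diff[OF cong_refl[of "int l + 1"]] by fastforce
    then show "j = j'" using j by (rule cong_imp_eq_atLeastAtMost)
  qed
  moreover have "piece_index l ` {1..k + 1} \<subseteq> {1..k + 1}" using piece_index_range by blast
  ultimately show ?thesis by (simp add: bij_betw_def endo_inj_surj)
qed

lemma bij_betw_piece_index_bucket: "bij_betw (\<lambda>l. piece_index l j) {1..k + 1} {1..k + 1}"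
proof -
  have "inj_on (\<lambda>l. piece_index l j) {1..k + 1}"
  proof (rule inj_onI)
    fix l l' assume l: "l \<in> {1..k + 1}" "l' \<in> {1..k + 1}" and "piece_index l j = piece_index l' j"
    then have "[int l - (int j - 1) = int l' - (int j - 1)] (mod int (k + 1))"
      by (simp add: piece_index_def mod_rep_eq_iff)
    then have "[int l = int l'] (mod int (k + 1))"
      using cong_add[OF _ cong_refl[of "int j - 1"]] by fastforce
    then show "l = l'" using l by (rule cong_imp_eq_atLeastAtMost)
  qed
  moreover have "(\<lambda>l. piece_index l j) ` {1..k + 1} \<subseteq> {1..k + 1}" using piece_index_range by blast
  ultimately show ?thesis by (simp add: bij_betw_def endo_inj_surj)
qed

lemma length_piece: "length (C0 (k * s) k (block x j) (piece_index l j)) = piece_length (piece_index l j)"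
  unfolding piece_length_def using piece_index_range[of l j] by (intro length_C0[OF k_pos]) simp

lemma sum_piece_length: "(\<Sum>j = 1..k + 1. piece_length (piece_index l j)) = bucket_length"
proof -
  have "(\<Sum>j = 1..k + 1. piece_length (piece_index l j)) = (\<Sum>c = 1..k + 1. piece_length c)"
    by (rule sum.reindex_bij_betw[OF bij_betw_piece_index_block])
  also have "\<dots> = (\<Sum>c = 1..k. piece_length c) + piece_length (k + 1)"
    using sum.cl_ivl_Suc[of piece_length 1 k] by simp
  also have "\<dots> = bucket_length" by (simp add: piece_length_def bucket_length_def)
  finally show ?thesis .
qed

lemma sum_list_piece_length:
  "sum_list (map (\<lambda>j. piece_length (piece_index l j)) [1..<k + 2]) = bucket_length"
  using sum_piece_length[of l]
  by (simp add: interv_sum_list_conv_sum_set_nat atLeastLessThanSuc_atLeastAtMost)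

lemma length_code: "length (code x l) = bucket_length"
  by (simp only: code_eq_concat length_concat map_map comp_def length_piece sum_list_piece_length)

lemma bucket_functional_piece_entry:
  assumes "j \<in> {1..k + 1}" "p < piece_length (piece_index l j)"
  shows "bucket_functional code bucket_length l (\<lambda>x. C0 (k * s) k (block x j) (piece_index l j) ! p)"
proof -
  have "j \<in> set [1..<k + 2]" using assms(1) by auto
  from entry_in_concat_map[where G = "\<lambda>x j. C0 (k * s) k (block x j) (piece_index l j)",
      OF length_piece this assms(2)]
  obtain t where "t < bucket_length" "\<forall>x :: nat \<Rightarrow> 'a. code x l ! t = C0 (k * s) k (block x j) (piece_index l j) ! p"
    unfolding sum_list_piece_length code_eq_concat by blast
  then have eq: "(\<lambda>x :: nat \<Rightarrow> 'a. code x l ! t) = (\<lambda>x. C0 (k * s) k (block x j) (piece_index l j) ! p)"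
    by (intro ext) blast
  show ?thesis using bucket_functional_nth[OF \<open>t < bucket_length\<close>, of "code :: (nat \<Rightarrow> 'a) \<Rightarrow> _" l] unfolding eq .
qed

lemma nth_code_eq_sum_list:
  assumes "t < bucket_length"
  obtains I where "set I \<subseteq> {1..(k + 1) * (k * s)}"
    "\<And>x :: nat \<Rightarrow> 'a::field. code x l ! t = sum_list (map x I)"
proof -
  have "t < sum_list (map (\<lambda>j. piece_length (piece_index l j)) [1..<k + 2])"
    using assms by (simp only: sum_list_piece_length)
  from pos_in_concat_map[where G = "\<lambda>x j. C0 (k * s) k (block x j) (piece_index l j)",
      OF length_piece this]
  obtain j p where j: "j \<in> set [1..<k + 2]" and p: "p < piece_length (piece_index l j)"
      and t: "\<forall>x :: nat \<Rightarrow> 'a. code x l ! t = C0 (k * s) k (block x j) (piece_index l j) ! p"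
    unfolding code_eq_concat by blast
  from j have j: "j \<in> {1..k + 1}" by auto
  obtain I where I: "set I \<subseteq> {1..k * s}"
      "\<And>z :: nat \<Rightarrow> 'a. C0 (k * s) k z (piece_index l j) ! p = sum_list (map z I)"
    using nth_C0_eq_sum_list[OF k_pos, where c = "piece_index l j" and p = p and s = s and z = "block (\<lambda>_. 0 :: 'a) j"]
      piece_index_range[of l j] p length_piece[where x = "\<lambda>_. 0 :: 'a" and j = j and l = l] by auto
  let ?J = "map (\<lambda>i. (j - 1) * (k * s) + i) I"
  have "(j - 1) * (k * s) + i \<in> {1..(k + 1) * (k * s)}" if "i \<in> {1..k * s}" for i
    using that j mult_le_mono1[of j "k + 1" "k * s"] diff_one_mult_add[of j "k * s"] by auto
  then have "set ?J \<subseteq> {1..(k + 1) * (k * s)}" using I(1) by auto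
  moreover have "code x l ! t = sum_list (map x ?J)" for x :: "nat \<Rightarrow> 'a"
    by (simp add: t I(2) block_def[abs_def] comp_def)
  ultimately show ?thesis using that by blast
qed

lemma linear_encoder_code:
  "linear_encoder ((k + 1) * (k * s)) (k + 1) (\<lambda>_. bucket_length) (code :: (nat \<Rightarrow> 'a::field) \<Rightarrow> _)"
  unfolding linear_encoder_def
proof (intro conjI allI ballI impI)
  fix x y :: "nat \<Rightarrow> 'a" and l
  assume xy: "\<forall>i\<in>{1..(k + 1) * (k * s)}. x i = y i"
  show "code x l = code y l"
  proof (rule nth_equalityI)
    fix t assume "t < length (code x l)"
    then obtain I where I: "set I \<subseteq> {1..(k + 1) * (k * s)}"
        "\<And>x' :: nat \<Rightarrow> 'a. code x' l ! t = sum_list (map x' I)"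
      using nth_code_eq_sum_list[of t l] by (auto simp: length_code)
    have "map x I = map y I" using I(1) xy by (intro map_cong) auto
    then show "code x l ! t = code y l ! t" by (simp only: I(2))
  qed (simp add: length_code)
next
  fix x y :: "nat \<Rightarrow> 'a" and a b :: 'a and l t
  assume "t < bucket_length"
  then obtain I where I: "\<And>x' :: nat \<Rightarrow> 'a. code x' l ! t = sum_list (map x' I)"
    using nth_code_eq_sum_list[of t l] by blast
  show "code (\<lambda>i. a * x i + b * y i) l ! t = a * code x l ! t + b * code y l ! t"
    unfolding I by (simp add: sum_list_addf sum_list_const_mult)
qed (simp add: length_code)

lemma message_index_decomp:
  assumes "r \<in> {1..(k + 1) * (k * s)}"
  obtains j u b where "j \<in> {1..k + 1}" "u < k" "b \<in> {1..s}"
    "r = (j - 1) * (k * s) + (u * s + b)"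
proof -
  define q where "q = (r - 1) mod (k * s)"
  have ks: "0 < k * s" using k_pos s_pos by simp
  have "(r - 1) div (k * s) < k + 1"
    using assms by (intro less_mult_imp_div_less) auto
  moreover have "q div s < k" using ks by (simp add: q_def less_mult_imp_div_less)
  moreover have "q mod s + 1 \<in> {1..s}" using s_pos by (simp add: Suc_le_eq)
  moreover have "r = (r - 1) div (k * s) * (k * s) + (q div s * s + (q mod s + 1))"
    using assms div_mult_mod_eq[of "r - 1" "k * s"] by (simp add: q_def)
  ultimately show ?thesis using that[of "(r - 1) div (k * s) + 1" "q div s" "q mod s + 1"] by simp
qed

lemma bucket_functional_kept_entry:
  assumes "j \<in> {1..k + 1}" "piece_index l j \<le> k" "u < k" "b \<in> {1..s}" "piece_index l j \<noteq> u + 1"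
  shows "bucket_functional (code :: (nat \<Rightarrow> 'a::field) \<Rightarrow> _) bucket_length l
    (\<lambda>x. x ((j - 1) * (k * s) + (u * s + b)))"
proof -
  let ?c = "piece_index l j"
  have c: "1 \<le> ?c" using piece_index_range[of l j] by simp
  have "u * s + b \<in> {1..k * s} - P0 (k * s) k ?c"
    using offset_in_block[OF assms(3,4)] mem_P0_iff[OF k_pos c assms(4)] assms(5) by auto
  then obtain p where p: "p < k * s - s" "\<And>z :: nat \<Rightarrow> 'a. C0 (k * s) k z ?c ! p = z (u * s + b)"
    using nth_C0_kept[OF k_pos c assms(2)] by blast
  have "p < piece_length ?c" using p(1) assms(2) by (simp add: piece_length_def)
  moreover have "(\<lambda>x :: nat \<Rightarrow> 'a. C0 (k * s) k (block x j) ?c ! p) = (\<lambda>x. x ((j - 1) * (k * s) + (u * s + b)))"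
    by (simp add: p(2) block_def)
  ultimately show ?thesis using bucket_functional_piece_entry[OF assms(1)] by metis
qed

lemma bucket_functional_parity_entry:
  assumes "j \<in> {1..k + 1}" "piece_index l j = k + 1" "b \<in> {1..s}"
  shows "bucket_functional (code :: (nat \<Rightarrow> 'a::field) \<Rightarrow> _) bucket_length l
    (\<lambda>x. \<Sum>u<k. x ((j - 1) * (k * s) + (u * s + b)))"
proof -
  have parity: "\<not> piece_index l j \<le> k" using assms(2) by simp
  have "b - 1 < piece_length (piece_index l j)" using assms(2,3) by (auto simp: piece_length_def)
  moreover have "(\<lambda>x :: nat \<Rightarrow> 'a. C0 (k * s) k (block x j) (piece_index l j) ! (b - 1))
      = (\<lambda>x. \<Sum>u<k. x ((j - 1) * (k * s) + (u * s + b)))"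
    unfolding nth_C0_parity[OF k_pos parity assms(3)] by (simp add: block_def)
  ultimately show ?thesis using bucket_functional_piece_entry[OF assms(1)] by metis
qed

text \<open>The parity piece holds the sum of the sub-blocks at offset b, and piece u + 1 holds
  all of them except sub-block u.\<close>
lemma recoverable_from_piece_and_parity:
  assumes "finite S" "j \<in> {1..k + 1}" "u < k" "b \<in> {1..s}"
    and "l1 \<in> S" "piece_index l1 j = u + 1" "l2 \<in> S" "piece_index l2 j = k + 1"
  shows "recoverable (code :: (nat \<Rightarrow> 'a::field) \<Rightarrow> _) bucket_length S
    (\<lambda>x. x ((j - 1) * (k * s) + (u * s + b)))"
proof -
  let ?e = "\<lambda>x u'. x ((j - 1) * (k * s) + (u' * s + b))"
  have "bucket_functional (code :: (nat \<Rightarrow> 'a) \<Rightarrow> _) bucket_length l1 (\<lambda>x. \<Sum>u'\<in>{..<k} - {u}. ?e x u')"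
    using assms(2-4,6) by (intro bucket_functional_sum bucket_functional_kept_entry) auto
  moreover have "bucket_functional (code :: (nat \<Rightarrow> 'a) \<Rightarrow> _) bucket_length l2 (\<lambda>x. \<Sum>u'<k. ?e x u')"
    using bucket_functional_parity_entry[OF assms(2,8,4)] .
  ultimately have "recoverable (code :: (nat \<Rightarrow> 'a) \<Rightarrow> _) bucket_length S (\<lambda>x. (\<Sum>u'<k. ?e x u') - (\<Sum>u'\<in>{..<k} - {u}. ?e x u'))"
    using assms(1,5,7) by (intro recoverable_diff recoverable_if_bucket_functional)
  moreover have "(\<Sum>u'<k. ?e x u') - (\<Sum>u'\<in>{..<k} - {u}. ?e x u') = ?e x u" for x :: "nat \<Rightarrow> 'a"
    using assms(3) by (simp add: sum.remove)
  ultimately show ?thesis by simp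
qed

lemma request_recoverable_unless_psubset:
  assumes "r \<in> {1..(k + 1) * (k * s)}"
  obtains B where "finite B" "card B \<le> 2"
    "\<And>S. S \<subseteq> {1..k + 1} \<Longrightarrow> \<not> S \<subset> B \<Longrightarrow> recoverable (code :: (nat \<Rightarrow> 'a::field) \<Rightarrow> _) bucket_length S (\<lambda>x. x r)"
proof -
  obtain j u b where j: "j \<in> {1..k + 1}" and u: "u < k" and b: "b \<in> {1..s}"
      and r: "r = (j - 1) * (k * s) + (u * s + b)"
    using message_index_decomp[OF assms] .
  define B where "B = {l \<in> {1..k + 1}. piece_index l j \<in> {u + 1, k + 1}}"
  have bij: "bij_betw (\<lambda>l. piece_index l j) {1..k + 1} {1..k + 1}" by (rule bij_betw_piece_index_bucket)
  have B_sub: "B \<subseteq> {1..k + 1}" by (auto simp: B_def)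
  then have "card B = card ((\<lambda>l. piece_index l j) ` B)"
    using bij by (intro card_image[symmetric] inj_on_subset[OF bij_betw_imp_inj_on[OF bij]])
  also have "\<dots> \<le> card {u + 1, k + 1}" by (intro card_mono) (auto simp: B_def)
  also have "\<dots> \<le> 2" by (rule card_insert_le_m1) simp_all
  finally have card: "card B \<le> 2" .
  have "recoverable (code :: (nat \<Rightarrow> 'a) \<Rightarrow> _) bucket_length S (\<lambda>x. x r)" if S: "S \<subseteq> {1..k + 1}" "\<not> S \<subset> B" for S
  proof (cases "S \<subseteq> B")
    case False
    then obtain l where l: "l \<in> S" "l \<notin> B" by blast
    then have "piece_index l j \<le> k" "piece_index l j \<noteq> u + 1"
      using S(1) piece_index_range[of l j] by (auto simp: B_def)
    then have "bucket_functional (code :: (nat \<Rightarrow> 'a) \<Rightarrow> _) bucket_length l (\<lambda>x. x r)"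
      unfolding r using j u b by (intro bucket_functional_kept_entry)
    then show ?thesis using S(1) l(1) finite_subset by (intro recoverable_if_bucket_functional) auto
  next
    case True
    then have "B \<subseteq> S" using S(2) by blast
    have surj: "(\<lambda>l. piece_index l j) ` {1..k + 1} = {1..k + 1}"
      using bij by (rule bij_betw_imp_surj_on)
    have "u + 1 \<in> (\<lambda>l. piece_index l j) ` {1..k + 1}" "k + 1 \<in> (\<lambda>l. piece_index l j) ` {1..k + 1}"
      unfolding surj using u by simp_all
    then obtain l1 l2 where l1: "u + 1 = piece_index l1 j" "l1 \<in> {1..k + 1}"
        and l2: "k + 1 = piece_index l2 j" "l2 \<in> {1..k + 1}"
      by (elim imageE)
    then have "l1 \<in> S" "l2 \<in> S" using \<open>B \<subseteq> S\<close> by (auto simp: B_def)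
    moreover have "finite S" using S(1) finite_subset by blast
    ultimately show ?thesis unfolding r
      using recoverable_from_piece_and_parity[OF _ j u b] l1(1) l2(1) by metis
  qed
  moreover have "finite B" using B_sub finite_subset by blast
  ultimately show ?thesis using that card by blast
qed

lemma batch_recoverable:
  assumes "\<forall>q\<in>{1..k}. i q \<in> {1..(k + 1) * (k * s)}"
  shows "\<exists>R. is_partition_into (k + 1) k R \<and>
    (\<forall>q\<in>{1..k}. recoverable (code :: (nat \<Rightarrow> 'a::field) \<Rightarrow> _) bucket_length (R q) (\<lambda>x. x (i q)))"
proof -
  have "\<forall>q\<in>{1..k}. \<exists>B. finite B \<and> card B \<le> 2 \<and>
      (\<forall>S. S \<subseteq> {1..k + 1} \<longrightarrow> \<not> S \<subset> B \<longrightarrow> recoverable (code :: (nat \<Rightarrow> 'a) \<Rightarrow> _) bucket_length S (\<lambda>x. x (i q)))"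
    using request_recoverable_unless_psubset assms by metis
  then obtain B where B: "\<And>q. q \<in> {1..k} \<Longrightarrow> finite (B q) \<and> card (B q) \<le> 2"
    "\<And>q S. q \<in> {1..k} \<Longrightarrow> S \<subseteq> {1..k + 1} \<Longrightarrow> \<not> S \<subset> B q \<Longrightarrow>
       recoverable (code :: (nat \<Rightarrow> 'a) \<Rightarrow> _) bucket_length S (\<lambda>x. x (i q))"
    by metis
  obtain R where R: "(\<Union>q\<in>{1..k}. R q) = {1..k + 1}" "\<forall>q\<in>{1..k}. R q \<noteq> {}"
      "\<forall>q\<in>{1..k}. \<forall>q'\<in>{1..k}. q \<noteq> q' \<longrightarrow> R q \<inter> R q' = {}" "\<forall>q\<in>{1..k}. \<not> R q \<subset> B q"
    using exists_partition_not_psubset[of k "{1..k + 1}" B] k_pos B(1) by auto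
  have "is_partition_into (k + 1) k R" unfolding is_partition_into_def using R(1-3) by blast
  moreover have "recoverable (code :: (nat \<Rightarrow> 'a) \<Rightarrow> _) bucket_length (R q) (\<lambda>x. x (i q))"
    if q: "q \<in> {1..k}" for q
  proof -
    have "R q \<subseteq> {1..k + 1}" using R(1) q by blast
    moreover have "\<not> R q \<subset> B q" using R(4) q by blast
    ultimately show ?thesis by (rule B(2)[OF q])
  qed
  ultimately show ?thesis by blast
qed

lemma is_uniform_BAC_code:
  "is_uniform_BAC ((k + 1) * (k * s)) ((k + 1) * bucket_length) k (k + 1)
     (code :: (nat \<Rightarrow> 'a::field) \<Rightarrow> nat \<Rightarrow> 'a list)"
proof -
  have "1 \<le> bucket_length" using s_pos by (simp add: bucket_length_def)
  moreover have "\<exists>R. is_partition_into (k + 1) k R \<and> (\<forall>q\<in>{1..k}. \<exists>f g. \<forall>x :: nat \<Rightarrow> 'a.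
      x (i q) = (\<Sum>l\<in>R q. g l * (\<Sum>t<bucket_length. f l t * code x l ! t)))"
    if "\<forall>q\<in>{1..k}. i q \<in> {1..(k + 1) * (k * s)}" for i
    using batch_recoverable[OF that] unfolding recoverable_def by blast
  ultimately show ?thesis
    unfolding is_uniform_BAC_def is_BAC_def
    using linear_encoder_code by (intro conjI exI[of _ "\<lambda>_. bucket_length"]) (auto simp: length_code)
qed

lemma real_bucket_length: "real bucket_length = (real k - 1 + 1 / real k) * (real k * real s)"
  using k_pos by (simp add: bucket_length_def of_nat_diff field_simps)

end

theorem theorem4p4:
  fixes n k N L :: nat
  assumes "0 < n" and "0 < k" and "k * (k + 1) dvd n"
    and "real N = (real k - 1 + 1 / real k) * real n"
    and "real L = (real k - 1 + 1 / real k) * (real n / real (k + 1))"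
  shows "is_uniform_BAC n N k (k + 1) (constrB k n :: (nat \<Rightarrow> 'a::{field,finite}) \<Rightarrow> nat \<Rightarrow> 'a list)
         \<and> (\<forall>x :: nat \<Rightarrow> 'a. \<forall>l\<in>{1..k + 1}. length (constrB k n x l) = L)"
proof -
  obtain s where n: "n = (k + 1) * (k * s)"
    using assms(3) by (auto simp: dvd_def ac_simps)
  with assms(1) have "0 < s" by (cases s) auto
  interpret construction_B k s using assms(2) \<open>0 < s\<close> by unfold_locales
  have "real n / real (k + 1) = real k * real s"
    unfolding n of_nat_mult by (rule nonzero_mult_div_cancel_left) simp
  then have "real L = real bucket_length"
    unfolding assms(5) real_bucket_length by simp
  then have L: "L = bucket_length" by (simp only: of_nat_eq_iff)
  have "real N = real (k + 1) * ((real k - 1 + 1 / real k) * (real k * real s))"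
    unfolding assms(4) n of_nat_mult by (simp only: ac_simps)
  then have "real N = real ((k + 1) * bucket_length)"
    unfolding real_bucket_length of_nat_mult .
  then have N: "N = (k + 1) * bucket_length" by (simp only: of_nat_eq_iff)
  show ?thesis using is_uniform_BAC_code length_code unfolding N L n code_def by blast
qed

end
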